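(* Let $n\ge2$ and let $H_{n,n}$ be the half-graph with vertex set $\{u_1,\dots,u_n\}\cup\{v_1,\dots,v_n\}$ in which $u_i$ is adjacent to $v_j$ exactly when $j\ge i$ (and there are no other edges). Then $\chi_{\mathrm{so}}(H_{n,n})=n+1$ and $\alpha_{\mathrm{od}}(H_{n,n})=2$, and every odd independent set of $H_{n,n}$ with at least two vertices has the form $\{v_i,u_j\}$ with $i<j$.
   Context: An odd independent set in $G=(V,E)$ is an independent set $S$ such that every $v\in V\setminus S$ has either no neighbor or an odd number of neighbors in $S$; $\alpha_{\mathrm{od}}(G)$ is its maximum size. A strong odd coloring is a proper coloring such that for each vertex $v$ every color on $N(v)$ occurs an odd number of times on $N(v)$; $\chi_{\mathrm{so}}(G)$ is the minimum number of colors. *)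

theory Defs
  imports Main
begin

text \<open>Finite simple graphs are given by a vertex set Vs and a symmetric
irreflexive adjacency relation E (only its restriction to Vs matters).\<close>

definition nbhd :: "'a set \<Rightarrow> ('a \<Rightarrow> 'a \<Rightarrow> bool) \<Rightarrow> 'a \<Rightarrow> 'a set" where
  "nbhd Vs E v = {w \<in> Vs. E v w}"

definition independent_set :: "'a set \<Rightarrow> ('a \<Rightarrow> 'a \<Rightarrow> bool) \<Rightarrow> 'a set \<Rightarrow> bool" where
  "independent_set Vs E S \<longleftrightarrow> S \<subseteq> Vs \<and> (\<forall>x\<in>S. \<forall>y\<in>S. \<not> E x y)"

definition odd_independent_set :: "'a set \<Rightarrow> ('a \<Rightarrow> 'a \<Rightarrow> bool) \<Rightarrow> 'a set \<Rightarrow> bool" where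
  "odd_independent_set Vs E S \<longleftrightarrow> independent_set Vs E S \<and>
     (\<forall>v \<in> Vs - S. card (nbhd Vs E v \<inter> S) = 0 \<or> odd (card (nbhd Vs E v \<inter> S)))"

definition alpha_od :: "'a set \<Rightarrow> ('a \<Rightarrow> 'a \<Rightarrow> bool) \<Rightarrow> nat" where
  "alpha_od Vs E = Max (card ` {S. odd_independent_set Vs E S})"

definition strong_odd_coloring :: "'a set \<Rightarrow> ('a \<Rightarrow> 'a \<Rightarrow> bool) \<Rightarrow> ('a \<Rightarrow> nat) \<Rightarrow> bool" where
  "strong_odd_coloring Vs E c \<longleftrightarrow>
     (\<forall>x\<in>Vs. \<forall>y\<in>Vs. E x y \<longrightarrow> c x \<noteq> c y) \<and>
     (\<forall>v\<in>Vs. \<forall>x\<in>nbhd Vs E v. odd (card {w \<in> nbhd Vs E v. c w = c x}))"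

definition chi_so :: "'a set \<Rightarrow> ('a \<Rightarrow> 'a \<Rightarrow> bool) \<Rightarrow> nat" where
  "chi_so Vs E = (LEAST k. \<exists>c. strong_odd_coloring Vs E c \<and> card (c ` Vs) = k)"

datatype hvert = U nat | V nat

definition half_vertices :: "nat \<Rightarrow> hvert set" where
  "half_vertices n = U ` {1..n} \<union> V ` {1..n}"

fun half_adj :: "hvert \<Rightarrow> hvert \<Rightarrow> bool" where
  "half_adj (U i) (V j) = (i \<le> j)"
| "half_adj (V j) (U i) = (i \<le> j)"
| "half_adj _ _ = False"

end

theory Submission
  imports Defs
begin

text \<open>If the neighborhood of u arises from that of u' by adding a single vertex x, then
the color class of x in N(u) is one larger than in N(u'), so both cannot be odd: in a
strong odd coloring, x gets a color absent from N(u'). In the half-graph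
N(u_i) = N(u_(i+1)) + v_i, so v_i avoids the colors of v_(i+1), ..., v_n; hence the v's
need n colors, and u_1, adjacent to all of them, one more. Coloring u_i with i - 1 and
v_j with j is rainbow on every neighborhood, so n + 1 colors suffice.

If an odd independent set contained two u's, then for the second smallest index b with
u_b in the set, the vertex v_b would see exactly two of them; dually for two v's. So an
odd independent set with two vertices is {v_i, u_j}, and independence forces i < j.\<close>

lemma strong_odd_coloring_fresh_color:
  assumes "strong_odd_coloring Vs E c" "u \<in> Vs" "u' \<in> Vs"
    and "nbhd Vs E u = insert x (nbhd Vs E u')" "x \<notin> nbhd Vs E u'"
    and "y \<in> nbhd Vs E u'"
  shows "c y \<noteq> c x"
proof
  assume color: "c y = c x"
  let ?class = "\<lambda>w. {z \<in> nbhd Vs E w. c z = c x}"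
  have odd_class: "odd (card {z \<in> nbhd Vs E w. c z = c v})"
    if "w \<in> Vs" "v \<in> nbhd Vs E w" for w v
    using assms(1) that unfolding strong_odd_coloring_def by blast
  have odd_u: "odd (card (?class u))"
    using odd_class[OF assms(2), of x] assms(4) by simp
  have odd_u': "odd (card (?class u'))"
    using odd_class[OF assms(3,6)] color by simp
  then have "finite (?class u')"
    by (metis card.infinite even_zero)
  moreover have "?class u = insert x (?class u')"
    using assms(4) by auto
  ultimately have "card (?class u) = Suc (card (?class u'))"
    using assms(5) by simp
  with odd_u odd_u' show False
    by simp
qed

lemma strong_odd_coloringI_inj_on_nbhd:
  assumes "\<And>x y. x \<in> Vs \<Longrightarrow> y \<in> Vs \<Longrightarrow> E x y \<Longrightarrow> c x \<noteq> c y"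
    and "\<And>v. v \<in> Vs \<Longrightarrow> inj_on c (nbhd Vs E v)"
  shows "strong_odd_coloring Vs E c"
proof -
  have "{w \<in> nbhd Vs E v. c w = c x} = {x}" if "v \<in> Vs" "x \<in> nbhd Vs E v" for v x
    using assms(2)[OF that(1)] that(2) by (auto dest: inj_onD)
  then show ?thesis
    using assms(1) unfolding strong_odd_coloring_def by simp
qed

lemma odd_independent_setI_le_1:
  assumes "independent_set Vs E S"
    and "\<And>v. v \<in> Vs - S \<Longrightarrow> card (nbhd Vs E v \<inter> S) \<le> 1"
  shows "odd_independent_set Vs E S"
proof -
  have "card (nbhd Vs E v \<inter> S) = 0 \<or> odd (card (nbhd Vs E v \<inter> S))" if "v \<in> Vs - S" for v
    using assms(2)[OF that] by (cases "card (nbhd Vs E v \<inter> S)") auto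
  with assms(1) show ?thesis
    unfolding odd_independent_set_def by blast
qed

lemma odd_independent_set_nbhd_not_pair:
  assumes "odd_independent_set Vs E S" "v \<in> Vs - S" "x \<noteq> y"
  shows "nbhd Vs E v \<inter> S \<noteq> {x, y}"
proof
  assume "nbhd Vs E v \<inter> S = {x, y}"
  then have "card (nbhd Vs E v \<inter> S) = 2"
    using assms(3) by simp
  moreover have "card (nbhd Vs E v \<inter> S) = 0 \<or> odd (card (nbhd Vs E v \<inter> S))"
    using assms(1,2) unfolding odd_independent_set_def by blast
  ultimately show False
    by simp
qed

lemma two_smallest_elements:
  fixes A :: "'a::linorder set"
  assumes "finite A" "a \<in> A" "b \<in> A" "a \<noteq> b"
  obtains x y where "x < y" "{k \<in> A. k \<le> y} = {x, y}"
proof -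
  define x where "x = Min A"
  define y where "y = Min (A - {x})"
  have "x \<in> A"
    unfolding x_def using assms by (intro Min_in) auto
  moreover have "A - {x} \<noteq> {}"
    using assms by auto
  then have "y \<in> A - {x}"
    unfolding y_def using assms(1) by (intro Min_in) auto
  moreover have "x \<le> k" "k \<noteq> x \<Longrightarrow> y \<le> k" if "k \<in> A" for k
    using that assms(1) by (auto simp: x_def y_def)
  ultimately have "x < y" "{k \<in> A. k \<le> y} = {x, y}"
    by (auto intro: order.antisym simp: order.strict_iff_order)
  then show thesis ..
qed

lemma two_largest_elements:
  fixes A :: "'a::linorder set"
  assumes "finite A" "a \<in> A" "b \<in> A" "a \<noteq> b"
  obtains x y where "y < x" "{k \<in> A. y \<le> k} = {x, y}"
proof -
  define x where "x = Max A"
  define y where "y = Max (A - {x})"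
  have "x \<in> A"
    unfolding x_def using assms by (intro Max_in) auto
  moreover have "A - {x} \<noteq> {}"
    using assms by auto
  then have "y \<in> A - {x}"
    unfolding y_def using assms(1) by (intro Max_in) auto
  moreover have "k \<le> x" "k \<noteq> x \<Longrightarrow> k \<le> y" if "k \<in> A" for k
    using that assms(1) by (auto simp: x_def y_def)
  ultimately have "y < x" "{k \<in> A. y \<le> k} = {x, y}"
    by (auto intro: order.antisym simp: order.strict_iff_order)
  then show thesis ..
qed

lemma finite_half_vertices: "finite (half_vertices n)"
  by (simp add: half_vertices_def)

lemma nbhd_half_U:
  "nbhd (half_vertices n) half_adj (U i) = V ` {l \<in> {1..n}. i \<le> l}"
  unfolding nbhd_def half_vertices_def by (auto elim: half_adj.elims)

lemma nbhd_half_V: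
  "nbhd (half_vertices n) half_adj (V j) = U ` {l \<in> {1..n}. l \<le> j}"
  unfolding nbhd_def half_vertices_def by (auto elim: half_adj.elims)

lemma nbhd_half_U_Int:
  assumes "S \<subseteq> half_vertices n"
  shows "nbhd (half_vertices n) half_adj (U i) \<inter> S = V ` {k. V k \<in> S \<and> i \<le> k}"
  unfolding nbhd_half_U using assms by (auto simp: half_vertices_def)

lemma nbhd_half_V_Int:
  assumes "S \<subseteq> half_vertices n"
  shows "nbhd (half_vertices n) half_adj (V j) \<inter> S = U ` {k. U k \<in> S \<and> k \<le> j}"
  unfolding nbhd_half_V using assms by (auto simp: half_vertices_def)

lemma nbhd_half_U_eq_insert:
  assumes "1 \<le> i" "i \<le> n"
  shows "nbhd (half_vertices n) half_adj (U i)
           = insert (V i) (nbhd (half_vertices n) half_adj (U (Suc i)))"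
  using assms by (auto simp: nbhd_half_U)

lemma half_strong_odd_coloring_inj_on_V:
  assumes "strong_odd_coloring (half_vertices n) half_adj c"
  shows "inj_on (c \<circ> V) {1..n}"
proof (rule linorder_inj_onI')
  fix i j :: nat
  assume "i \<in> {1..n}" "j \<in> {1..n}" "i < j"
  moreover have "U i \<in> half_vertices n" "U (Suc i) \<in> half_vertices n"
    using \<open>i \<in> {1..n}\<close> \<open>j \<in> {1..n}\<close> \<open>i < j\<close> by (auto simp: half_vertices_def)
  moreover have "nbhd (half_vertices n) half_adj (U i)
                   = insert (V i) (nbhd (half_vertices n) half_adj (U (Suc i)))"
    using \<open>i \<in> {1..n}\<close> by (simp add: nbhd_half_U_eq_insert)
  ultimately have "c (V j) \<noteq> c (V i)"
    by (intro strong_odd_coloring_fresh_color[OF assms, of "U i" "U (Suc i)"])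
      (auto simp: nbhd_half_U)
  then show "(c \<circ> V) i \<noteq> (c \<circ> V) j"
    by simp
qed

lemma half_strong_odd_coloring_card_ge:
  assumes "strong_odd_coloring (half_vertices n) half_adj c" "1 \<le> n"
  shows "n + 1 \<le> card (c ` half_vertices n)"
proof -
  have "c (U 1) \<notin> c ` V ` {1..n}"
    using assms unfolding strong_odd_coloring_def by (force simp: half_vertices_def)
  then have "n + 1 = card (c ` insert (U 1) (V ` {1..n}))"
    using card_image[OF half_strong_odd_coloring_inj_on_V[OF assms(1)]]
    by (simp add: image_comp)
  also have "\<dots> \<le> card (c ` half_vertices n)"
    using assms(2) finite_half_vertices
    by (intro card_mono finite_imageI image_mono) (auto simp: half_vertices_def)
  finally show ?thesis .
qed

definition half_coloring :: "hvert \<Rightarrow> nat" where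
  "half_coloring x = (case x of U i \<Rightarrow> i - 1 | V j \<Rightarrow> j)"

lemma half_coloring_strong_odd:
  "strong_odd_coloring (half_vertices n) half_adj half_coloring"
proof (rule strong_odd_coloringI_inj_on_nbhd)
  show "half_coloring x \<noteq> half_coloring y"
    if "x \<in> half_vertices n" "y \<in> half_vertices n" "half_adj x y" for x y
    using that by (auto simp: half_vertices_def half_coloring_def)
  show "inj_on half_coloring (nbhd (half_vertices n) half_adj v)" for v
    by (cases v) (auto simp: nbhd_half_U nbhd_half_V half_coloring_def inj_on_def)
qed

lemma half_coloring_card:
  assumes "1 \<le> n"
  shows "card (half_coloring ` half_vertices n) = n + 1"
proof -
  have "(\<lambda>i. i - 1) ` {1..n} = {0..<n}"
    by (auto simp: image_iff intro!: bexI[of _ "Suc _"])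
  then have "half_coloring ` half_vertices n = {0..<n} \<union> {1..n}"
    by (simp add: half_vertices_def half_coloring_def image_Un image_image)
  also have "\<dots> = {0..n}"
    using assms by auto
  finally show ?thesis
    by simp
qed

lemma half_chi_so:
  assumes "1 \<le> n"
  shows "chi_so (half_vertices n) half_adj = n + 1"
  unfolding chi_so_def
proof (rule Least_equality)
  show "\<exists>c. strong_odd_coloring (half_vertices n) half_adj c \<and> card (c ` half_vertices n) = n + 1"
    using half_coloring_strong_odd half_coloring_card[OF assms] by blast
  show "n + 1 \<le> k"
    if "\<exists>c. strong_odd_coloring (half_vertices n) half_adj c \<and> card (c ` half_vertices n) = k" for k
    using that half_strong_odd_coloring_card_ge[OF _ assms] by blast
qed

lemma half_odd_independent_U_unique:
  assumes S: "odd_independent_set (half_vertices n) half_adj S" and "U a \<in> S" "U b \<in> S"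
  shows "a = b"
proof (rule ccontr)
  assume "a \<noteq> b"
  have sub: "S \<subseteq> half_vertices n" and indep: "\<And>x y. x \<in> S \<Longrightarrow> y \<in> S \<Longrightarrow> \<not> half_adj x y"
    using S unfolding odd_independent_set_def independent_set_def by auto
  have "{k. U k \<in> S} \<subseteq> {1..n}"
    using sub by (auto simp: half_vertices_def)
  then have "finite {k. U k \<in> S}"
    by (rule finite_subset) simp
  then obtain x y where "x < y" and below_y: "{k \<in> {k. U k \<in> S}. k \<le> y} = {x, y}"
    using assms(2,3) \<open>a \<noteq> b\<close> by (auto elim: two_smallest_elements[of _ a b])
  then have "U x \<in> S" "U y \<in> S"
    by auto
  then have "V y \<in> half_vertices n - S"
    using sub indep[of "U y" "V y"] by (auto simp: half_vertices_def)
  moreover have "nbhd (half_vertices n) half_adj (V y) \<inter> S = {U x, U y}"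
    using below_y by (simp add: nbhd_half_V_Int[OF sub])
  ultimately show False
    using odd_independent_set_nbhd_not_pair[OF S, of "V y" "U x" "U y"] \<open>x < y\<close> by simp
qed

lemma half_odd_independent_V_unique:
  assumes S: "odd_independent_set (half_vertices n) half_adj S" and "V a \<in> S" "V b \<in> S"
  shows "a = b"
proof (rule ccontr)
  assume "a \<noteq> b"
  have sub: "S \<subseteq> half_vertices n" and indep: "\<And>x y. x \<in> S \<Longrightarrow> y \<in> S \<Longrightarrow> \<not> half_adj x y"
    using S unfolding odd_independent_set_def independent_set_def by auto
  have "{k. V k \<in> S} \<subseteq> {1..n}"
    using sub by (auto simp: half_vertices_def)
  then have "finite {k. V k \<in> S}"
    by (rule finite_subset) simp
  then obtain x y where "y < x" and above_y: "{k \<in> {k. V k \<in> S}. y \<le> k} = {x, y}"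
    using assms(2,3) \<open>a \<noteq> b\<close> by (auto elim: two_largest_elements[of _ a b])
  then have "V x \<in> S" "V y \<in> S"
    by auto
  then have "U y \<in> half_vertices n - S"
    using sub indep[of "U y" "V y"] by (auto simp: half_vertices_def)
  moreover have "nbhd (half_vertices n) half_adj (U y) \<inter> S = {V x, V y}"
    using above_y by (simp add: nbhd_half_U_Int[OF sub])
  ultimately show False
    using odd_independent_set_nbhd_not_pair[OF S, of "U y" "V x" "V y"] \<open>y < x\<close> by simp
qed

lemma half_odd_independent_card_ge_2:
  assumes S: "odd_independent_set (half_vertices n) half_adj S" and "2 \<le> card S"
  shows "\<exists>i j. i < j \<and> S = {V i, U j}"
proof -
  obtain T where "T \<subseteq> S" "card T = 2"
    using obtain_subset_with_card_n[OF assms(2)] .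
  then obtain x y where "x \<in> S" "y \<in> S" "x \<noteq> y"
    by (auto simp: card_2_iff)
  then obtain i j where ij: "V i \<in> S" "U j \<in> S"
    using half_odd_independent_U_unique[OF S] half_odd_independent_V_unique[OF S]
    by (cases x; cases y) auto
  have "z \<in> {V i, U j}" if "z \<in> S" for z
    using that ij half_odd_independent_U_unique[OF S] half_odd_independent_V_unique[OF S]
    by (cases z) auto
  with ij have "S = {V i, U j}"
    by blast
  moreover have "i < j"
    using S ij unfolding odd_independent_set_def independent_set_def by force
  ultimately show ?thesis
    by blast
qed

lemma half_odd_independent_pair:
  assumes "2 \<le> n"
  shows "odd_independent_set (half_vertices n) half_adj {V 1, U 2}"
proof (rule odd_independent_setI_le_1)
  show "independent_set (half_vertices n) half_adj {V 1, U 2}"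
    using assms by (auto simp: independent_set_def half_vertices_def)
  fix v
  obtain a where "nbhd (half_vertices n) half_adj v \<inter> {V 1, U 2} \<subseteq> {a}"
    by (cases v) (auto simp: nbhd_half_U nbhd_half_V)
  then show "card (nbhd (half_vertices n) half_adj v \<inter> {V 1, U 2}) \<le> 1"
    using card_mono[of "{a}"] by simp
qed

lemma half_alpha_od:
  assumes "2 \<le> n"
  shows "alpha_od (half_vertices n) half_adj = 2"
  unfolding alpha_od_def
proof (rule Max_eqI)
  have le_2: "card S \<le> 2" if "odd_independent_set (half_vertices n) half_adj S" for S
    using half_odd_independent_card_ge_2[OF that] by (cases "2 \<le> card S") (auto simp: card_insert_if)
  then show "finite (card ` {S. odd_independent_set (half_vertices n) half_adj S})"
    by (auto intro: finite_subset[of _ "{..2}"])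
  show "k \<le> 2" if "k \<in> card ` {S. odd_independent_set (half_vertices n) half_adj S}" for k
    using that le_2 by blast
  show "2 \<in> card ` {S. odd_independent_set (half_vertices n) half_adj S}"
    using half_odd_independent_pair[OF assms] by (force intro: image_eqI[of _ _ "{V 1, U 2}"])
qed

theorem proposition11:
  fixes n :: nat
  assumes "n \<ge> 2"
  shows "chi_so (half_vertices n) half_adj = n + 1 \<and>
         alpha_od (half_vertices n) half_adj = 2 \<and>
         (\<forall>S. odd_independent_set (half_vertices n) half_adj S \<and> card S \<ge> 2 \<longrightarrow>
           (\<exists>i j. i < j \<and> S = {V i, U j}))"
  using assms half_chi_so half_alpha_od half_odd_independent_card_ge_2 by auto

end
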